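(* Consider an autonomous system $\dot{\bm z}=X(\bm z)$, $X:\mathbb{C}^n\to\mathbb{C}^n$, a non-trivial solution $\phi(t)$ of it, and $t_0$ such that $X_i(\phi(t_0))\neq 0$ for some index $i$. Write $A_0:=X(\phi(t_0))$, $X_i^0:=X_i(\phi(t_0))$, and for $j\ge 1$ let $A_j:=X^{(j)}(\phi(t_0))$ be the lexicographically ordered matrix of all order-$j$ partial derivatives of $X$ evaluated at $\phi(t_0)$ (an $n\times d_{n,j}$ matrix, $d_{n,j}=\binom{n+j-1}{n-1}$). Define the constant matrices $F_1:=\mathrm{Id}_n-\frac{1}{X_i^0}\left(A_0\odot \bm{e}_i^T\right)$ and, for $k\ge 2$, $F_{k}=-\frac{1}{X^0_i} \left[\sum_{j=0}^{k-2}\binom{k-1}{j}F_{j+1}\left(A_{k-j-1}\odot \mathrm{Id}_n^{\odot j}\right)\right] U_k$, where $U_k=\left[\sum_{j=0}^{k-1} \binom{k}{j+1} (-1)^{j} (\mathrm{Id}_n - F_1)^{\odot j} \odot \mathrm{Id}_n^{\odot k-1-j}\right]\odot \bm{e}_i^T = \left[\bigodot_{j=1}^{k-1}(\mathrm{Id}_n-\zeta_k^jF_1)\right]\odot \bm{e}_i^T$, with $\zeta_k=\exp(2\pi \mathrm{i}/k)$. Then for every $k\ge 1$, $F_k\left(A_0\odot \mathrm{Id}_n^{\odot k-1}\right) + \binom{k-1}{1} F_{k-1}\left(A_1\odot \mathrm{Id}_n^{\odot k-2}\right) + \dots + \binom{k-1}{k-2} F_{2}\left(A_{k-2}\odot \mathrm{Id}_n\right)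 + F_{1}A_{k-1} =0,$ i.e. the conjectured filter matrix $\Phi=\exp_\odot(\cdots\mid F_3\mid F_2\mid F_1)$ satisfies the admissibility (kernel) condition at $t=t_0$ for every order $k\ge1$.
   Context: Here $\odot$ denotes Bekbaev's symmetric product of matrices: a matrix in $\mathrm{Mat}^{i,j}_{n}$ is identified with a linear map $\mathrm{Sym}^j K^n\to\mathrm{Sym}^i K^n$ (a $d_{n,i}\times d_{n,j}$ matrix), and $A\odot B$ acts on symmetric monomials $\bm{e}_1^{\odot k_1}\cdots\bm{e}_n^{\odot k_n}$ by $\frac{1}{\binom{j_1+j_2}{j_1}}\sum_{\mathbf p}\binom{\mathbf k}{\mathbf p}A(\bm e^{\odot\mathbf p})\odot B(\bm e^{\odot(\mathbf k-\mathbf p)})$, behaving like multiplication of homogeneous polynomials; powers $^{\odot k}$ are built from it, and $\exp_\odot A=\sum_{i\ge0}\frac{1}{i!}A^{\odot i}$. $\bm e_i$ is the $i$-th canonical basis vector of $K^n$. The displayed identity is the condition that the lower block of the (conjectural) filter matrix, applied to the inverse fundamental matrix of the linearized higher variational system, yields admissible solutions of the dual (adjoint) variational system, i.e. jets of formal first integrals; the statement proves this condition only at the initial time $t_0$, the full conjecture remaining open. *)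

theory Defs
  imports "HOL-Analysis.Analysis"
begin

text \<open>Multi-indices over the finite index type 'n (the coordinates 1..n of C^n).
  A multi-index k encodes the symmetric monomial e_1^k_1 ... e_n^k_n.\<close>
type_synonym 'n mi = "'n \<Rightarrow> nat"

definition mdeg :: "'n::finite mi \<Rightarrow> nat" where
  "mdeg k = (\<Sum>l\<in>UNIV. k l)"

definition mzero :: "'n mi" where "mzero = (\<lambda>_. 0)"

definition munit :: "'n \<Rightarrow> 'n mi" where
  "munit i = (\<lambda>l. if l = i then 1 else 0)"

definition msubi :: "'n mi \<Rightarrow> 'n mi \<Rightarrow> 'n mi" where
  "msubi a b = (\<lambda>l. a l - b l)"

definition mbinom :: "'n::finite mi \<Rightarrow> 'n mi \<Rightarrow> nat" where
  "mbinom k p = (\<Prod>l\<in>UNIV. k l choose p l)"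

text \<open>A matrix in Mat^{i,j}_n (linear map Sym^j K^n -> Sym^i K^n), K = complex,
  given by its entries M r c = coefficient of e^r in M(e^c), with r of degree i,
  c of degree j. Degrees are passed explicitly to the operations.\<close>
type_synonym 'n smat = "'n mi \<Rightarrow> 'n mi \<Rightarrow> complex"

definition mzeromat :: "'n smat" where "mzeromat = (\<lambda>r c. 0)"

definition madd :: "'n smat \<Rightarrow> 'n smat \<Rightarrow> 'n smat" where
  "madd A B = (\<lambda>r c. A r c + B r c)"

definition mscale :: "complex \<Rightarrow> 'n smat \<Rightarrow> 'n smat" where
  "mscale a A = (\<lambda>r c. a * A r c)"

definition msum :: "'b set \<Rightarrow> ('b \<Rightarrow> 'n smat) \<Rightarrow> 'n smat" where
  "msum J M = (\<lambda>r c. \<Sum>j\<in>J. M j r c)"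

definition mmul :: "nat \<Rightarrow> 'n::finite smat \<Rightarrow> 'n smat \<Rightarrow> 'n smat" where
  "mmul d M N = (\<lambda>r c. \<Sum>m\<in>{m. mdeg m = d}. M r m * N m c)"

definition idm :: "'n::finite smat" where
  "idm = (\<lambda>r c. if r = c \<and> mdeg c = 1 then 1 else 0)"

definition unitm :: "'n smat" where
  "unitm = (\<lambda>r c. if r = mzero \<and> c = mzero then 1 else 0)"

definition erow :: "'n \<Rightarrow> 'n smat" where
  "erow i = (\<lambda>r c. if r = mzero \<and> c = munit i then 1 else 0)"

text \<open>Bekbaev's symmetric product A \<odot> B for A with input degree j1 and B with input
  degree j2: on e^c (|c| = j1+j2) it is
  1/binom(j1+j2,j1) * sum_p binom(c,p) A(e^p) \<odot> B(e^(c-p)),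
  where the product of symmetric vectors is multiplication of polynomials
  (e^q \<odot> e^s = e^(q+s)).\<close>
definition sprod :: "nat \<Rightarrow> nat \<Rightarrow> 'n::finite smat \<Rightarrow> 'n smat \<Rightarrow> 'n smat" where
  "sprod j1 j2 A B = (\<lambda>r c.
     if mdeg c = j1 + j2 then
       (\<Sum>p\<in>{p. p \<le> c \<and> mdeg p = j1}.
          of_nat (mbinom c p) * (\<Sum>q\<in>{q. q \<le> r}. A q p * B (msubi r q) (msubi c p)))
       / of_nat ((j1 + j2) choose j1)
     else 0)"

primrec spow :: "nat \<Rightarrow> nat \<Rightarrow> 'n::finite smat \<Rightarrow> 'n smat" where
  "spow j 0 A = unitm"
| "spow j (Suc k) A = sprod (k * j) j (spow j k A) A"

definition partial :: "'n \<Rightarrow> (complex^'n \<Rightarrow> complex) \<Rightarrow> complex^'n \<Rightarrow> complex" where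
  "partial l f = (\<lambda>z. deriv (\<lambda>w. f (z + (\<chi> m. if m = l then w else 0))) 0)"

primrec pd :: "nat \<Rightarrow> 'n mi \<Rightarrow> (complex^'n \<Rightarrow> complex) \<Rightarrow> complex^'n \<Rightarrow> complex" where
  "pd 0 k f = f"
| "pd (Suc d) k f = (let l = (SOME l. 0 < k l) in partial l (pd d (k(l := k l - 1)) f))"

definition pderiv :: "'n::finite mi \<Rightarrow> (complex^'n \<Rightarrow> complex) \<Rightarrow> complex^'n \<Rightarrow> complex" where
  "pderiv k f = pd (mdeg k) k f"

text \<open>X^{(j)}(z) as an element of Mat^{1,j}_n: column e^c (|c| = j) is
  (\<partial>^c X_1(z), ..., \<partial>^c X_n(z)). For j = 0 this is the column X(z).\<close>
definition derivmat :: "(complex^'n \<Rightarrow> complex^'n) \<Rightarrow> complex^'n \<Rightarrow> nat \<Rightarrow> 'n::finite smat" where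
  "derivmat X z j = (\<lambda>r c. if mdeg c = j then
      (\<Sum>l\<in>UNIV. if r = munit l then pderiv c (\<lambda>w. X w $ l) z else 0) else 0)"

end

theory Submission
  imports Defs
begin

text \<open>Read a vector of \<open>Sym^d K^n\<close> as a homogeneous polynomial in \<open>e_1, \<dots>, e_n\<close>, so that
  \<open>\<odot>\<close> becomes multiplication of polynomials, and put \<open>a = X(\<phi>(t_0))\<close>. Then
  \<open>P = A_0 \<odot> Id_n^{\<odot>k-1}\<close> is multiplication by the linear form \<open>a\<close>, \<open>G = Id_n - F_1\<close> is
  \<open>a e_i^T / a_i\<close>, \<open>G^{\<odot>j} \<odot> Id_n^{\<odot>k-1-j}\<close> acts as
  \<open>p \<mapsto> a^j \<partial>_i^j p / (a_i^j j! binom(k-1,j))\<close>, and \<open>V \<odot> e_i^T\<close> acts as \<open>V \<partial>_i / k\<close>.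
  By the Leibniz rule \<open>\<partial>_i^{j+1}(a p) = a \<partial>_i^{j+1} p + (j+1) a_i \<partial>_i^j p\<close> the sum defining
  \<open>U_k P p\<close> telescopes to \<open>a_i p\<close>, because \<open>\<partial>_i^k p = 0\<close> for \<open>p\<close> of degree \<open>k-1\<close>.
  Hence \<open>U_k P = a_i Id\<close> on \<open>Sym^{k-1} K^n\<close>, and if \<open>W\<close> is the sum of the first \<open>k-1\<close>
  terms of the kernel condition, then \<open>F_k P = -(1/a_i) W U_k P = -W\<close>, which is the claim.\<close>

lemma finite_mi_le: "finite {q::'n::finite mi. q \<le> r}"
proof (rule finite_subset)
  show "{q::'n mi. q \<le> r} \<subseteq> PiE UNIV (\<lambda>l. {..r l})"
    by (auto simp: le_fun_def PiE_def extensional_def)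
qed (rule finite_PiE; simp)

lemma mi_le_mdeg: "m l \<le> mdeg (m::'n::finite mi)"
  unfolding mdeg_def by (rule member_le_sum) auto

lemma finite_mdeg_eq: "finite {m::'n::finite mi. mdeg m = d}"
  using mi_le_mdeg by (intro finite_subset[OF _ finite_mi_le[of "\<lambda>_. d"]]) (fastforce simp: le_fun_def)

lemma finite_mi_le_mdeg_eq: "finite {p::'n::finite mi. p \<le> c \<and> mdeg p = d}"
  by (rule finite_subset[OF _ finite_mi_le[of c]]) auto

lemma mdeg_fun_upd: "mdeg (r(l := v)) + r l = mdeg (r::'n::finite mi) + v"
proof -
  have "mdeg r = r l + (\<Sum>m\<in>UNIV-{l}. r m)"
    unfolding mdeg_def by (simp add: sum.remove)
  moreover have "mdeg (r(l := v)) = v + (\<Sum>m\<in>UNIV-{l}. r m)"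
    unfolding mdeg_def by (subst sum.remove[of _ l]) (auto intro!: sum.cong)
  ultimately show ?thesis by simp
qed

lemma mdeg_mzero [simp]: "mdeg (mzero::'n::finite mi) = 0"
  by (simp add: mdeg_def mzero_def)

lemma mdeg_eq_0_iff: "mdeg (m::'n::finite mi) = 0 \<longleftrightarrow> m = mzero"
  by (auto simp: mdeg_def mzero_def fun_eq_iff)

lemma mdeg_munit [simp]: "mdeg (munit l::'n::finite mi) = 1"
  by (simp add: mdeg_def munit_def)

lemma mzero_le [simp]: "mzero \<le> r"
  by (simp add: mzero_def le_fun_def)

lemma msubi_mzero [simp]: "msubi c mzero = c"
  by (simp add: msubi_def mzero_def)

lemma mbinom_mzero [simp]: "mbinom c mzero = 1"
  by (simp add: mbinom_def mzero_def)

lemma munit_le_iff: "munit l \<le> r \<longleftrightarrow> 0 < r l"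
  by (auto simp: munit_def le_fun_def)

lemma msubi_munit: "msubi r (munit l) = r(l := r l - 1)"
  by (auto simp: msubi_def munit_def fun_eq_iff)

lemma munit_eq_iff [simp]: "munit l = munit m \<longleftrightarrow> l = m"
  by (auto simp: munit_def fun_eq_iff dest: spec[of _ l])

lemma mi_le_mdeg_antisym: "p \<le> q \<Longrightarrow> mdeg p = mdeg q \<Longrightarrow> p = (q::'n::finite mi)"
proof (rule ccontr)
  assume pq: "p \<le> q" "mdeg p = mdeg q" "p \<noteq> q"
  then obtain l where "p l < q l"
    by (auto simp: le_fun_def fun_eq_iff intro: le_neq_trans)
  with pq(1) have "mdeg p < mdeg q"
    unfolding mdeg_def by (intro sum_strict_mono_ex1) (auto simp: le_fun_def)
  with pq(2) show False by simp
qed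

lemma msubi_eq_iff:
  assumes "q \<le> r"
  shows "msubi r q = d \<longleftrightarrow> d \<le> r \<and> q = msubi r d"
proof -
  have "r l - q l = d l \<longleftrightarrow> d l \<le> r l \<and> q l = r l - d l" for l
    using assms[unfolded le_fun_def, rule_format, of l] by arith
  then show ?thesis by (auto simp: msubi_def le_fun_def fun_eq_iff)
qed

lemma msubi_eq_munit_iff:
  assumes "0 < c l"
  shows "c(l := c l - 1) \<le> r \<and> msubi r (c(l := c l - 1)) = munit l \<longleftrightarrow> r = c"
proof
  assume "c(l := c l - 1) \<le> r \<and> msubi r (c(l := c l - 1)) = munit l"
  then have "0 < r l" and eq: "c(l := c l - 1) = r(l := r l - 1)"
    by (auto simp: msubi_eq_iff munit_le_iff msubi_munit)
  show "r = c"
  proof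
    fix m
    show "r m = c m" using fun_cong[OF eq, of m] \<open>0 < r l\<close> assms by (cases "m = l") auto
  qed
qed (use assms in \<open>auto simp: le_fun_def msubi_def munit_def fun_eq_iff\<close>)

lemma sum_mi_le_delta:
  "(\<Sum>q\<in>{q. q \<le> (r::'n::finite mi)}. if q = a then f q else 0)
     = (if a \<le> r then f a else (0::'a::comm_monoid_add))"
  using finite_mi_le[of r] by (simp add: sum.delta)

lemma sum_mi_le_msubi_delta:
  "(\<Sum>q\<in>{q. q \<le> (r::'n::finite mi)}. if msubi r q = d then f q else 0)
     = (if d \<le> r then f (msubi r d) else (0::'a::comm_monoid_add))"
proof -
  have "(\<Sum>q\<in>{q. q \<le> r}. if msubi r q = d then f q else 0)
      = (\<Sum>q\<in>{q. q \<le> r}. if q = msubi r d then (if d \<le> r then f q else 0) else 0)"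
    by (rule sum.cong) (auto simp: msubi_eq_iff)
  also have "\<dots> = (if d \<le> r then f (msubi r d) else 0)"
    by (simp add: sum_mi_le_delta) (auto simp: msubi_def le_fun_def)
  finally show ?thesis .
qed

definition munit_pow :: "'n \<Rightarrow> nat \<Rightarrow> 'n mi" where
  "munit_pow i j = (\<lambda>l. if l = i then j else 0)"

lemma mdeg_munit_pow [simp]: "mdeg (munit_pow i j :: 'n::finite mi) = j"
  by (simp add: mdeg_def munit_pow_def)

lemma munit_pow_le_iff [simp]: "munit_pow i j \<le> c \<longleftrightarrow> j \<le> c i"
  by (auto simp: munit_pow_def le_fun_def)

lemma msubi_munit_pow: "msubi p (munit_pow i j) = p(i := p i - j)"
  by (auto simp: msubi_def munit_pow_def fun_eq_iff)

lemma mbinom_munit_pow [simp]: "mbinom c (munit_pow i j :: 'n::finite mi) = c i choose j"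
proof -
  have "mbinom c (munit_pow i j) = (\<Prod>l\<in>UNIV. if l = i then c i choose j else 1)"
    unfolding mbinom_def munit_pow_def by (rule prod.cong) auto
  then show ?thesis by simp
qed

lemma sprod_eq_0_off_degree: "mdeg c \<noteq> j1 + j2 \<Longrightarrow> sprod j1 j2 A B r c = 0"
  by (simp add: sprod_def)

lemma sprod_0_left:
  assumes "mdeg c = j"
  shows "sprod 0 j A B r (c::'n::finite mi) = (\<Sum>q\<in>{q. q \<le> r}. A q mzero * B (msubi r q) c)"
proof -
  have "{p. p \<le> c \<and> mdeg p = 0} = {mzero::'n mi}"
    by (auto simp: mdeg_eq_0_iff)
  then show ?thesis using assms by (simp add: sprod_def)
qed

lemma sprod_single_column:
  assumes "\<And>q p. p \<noteq> munit_pow i j \<Longrightarrow> A q p = 0" and "mdeg c = j + k"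
  shows "sprod j k A B r (c::'n::finite mi) =
     (if j \<le> c i then of_nat (c i choose j) *
        (\<Sum>q\<in>{q. q \<le> r}. A q (munit_pow i j) * B (msubi r q) (msubi c (munit_pow i j))) else 0)
       / of_nat ((j + k) choose j)"
proof -
  let ?g = "\<lambda>p. of_nat (mbinom c p) * (\<Sum>q\<in>{q. q \<le> r}. A q p * B (msubi r q) (msubi c p))"
  have "(\<Sum>p\<in>{p. p \<le> c \<and> mdeg p = j}. ?g p)
      = (\<Sum>p\<in>{p. p \<le> c \<and> mdeg p = j}. if p = munit_pow i j then ?g p else 0)"
    by (rule sum.cong) (auto simp: assms(1))
  then show ?thesis
    using finite_mi_le_mdeg_eq[of c j] assms(2) by (simp add: sprod_def sum.delta)
qed

lemma sprod_deg1_right: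
  assumes c: "mdeg c = Suc j"
  shows "sprod j 1 A B r (c::'n::finite mi) =
    (\<Sum>l\<in>UNIV. if 0 < c l then of_nat (c l) *
        (\<Sum>q\<in>{q. q \<le> r}. A q (c(l := c l - 1)) * B (msubi r q) (munit l)) else 0)
     / of_nat (Suc j)"
proof -
  define h where "h l = c(l := c l - 1)" for l
  define g where "g p = (of_nat (mbinom c p) *
     (\<Sum>q\<in>{q. q \<le> r}. A q p * B (msubi r q) (msubi c p)) :: complex)" for p
  have mdeg_h: "mdeg (h l) = j" if "0 < c l" for l
    using mdeg_fun_upd[of c l "c l - 1"] c that by (simp add: h_def)
  have "bij_betw h {l. 0 < c l} {p. p \<le> c \<and> mdeg p = j}"
  proof (rule bij_betwI')
    fix l m assume "l \<in> {l. 0 < c l}" "m \<in> {l. 0 < c l}"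
    then show "h l = h m \<longleftrightarrow> l = m" by (auto simp: h_def fun_eq_iff split: if_splits)
  next
    fix l assume l: "l \<in> {l. 0 < c l}"
    have "h l \<le> c" by (simp add: h_def le_fun_def)
    with l mdeg_h show "h l \<in> {p. p \<le> c \<and> mdeg p = j}" by simp
  next
    fix p assume p: "p \<in> {p. p \<le> c \<and> mdeg p = j}"
    with c have "p \<noteq> c" by auto
    with p obtain l where l: "p l < c l"
      by (auto simp: le_fun_def fun_eq_iff intro: le_neq_trans)
    with p have "p \<le> h l" by (auto simp: h_def le_fun_def)
    with l p mdeg_h[of l] have "p = h l" using mi_le_mdeg_antisym by auto
    moreover from l have "0 < c l" by simp
    ultimately show "\<exists>l\<in>{l. 0 < c l}. p = h l" by blast
  qed
  then have "(\<Sum>p\<in>{p. p \<le> c \<and> mdeg p = j}. g p) = (\<Sum>l\<in>UNIV. if 0 < c l then g (h l) else 0)"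
    by (simp add: sum.reindex_bij_betw[symmetric] sum.inter_filter[symmetric])
  moreover have "g (h l) = of_nat (c l) *
      (\<Sum>q\<in>{q. q \<le> r}. A q (c(l := c l - 1)) * B (msubi r q) (munit l))" if "0 < c l" for l
  proof -
    have "mbinom c (h l) = (\<Prod>m\<in>UNIV. if m = l then c l else 1)"
      unfolding mbinom_def h_def
      using that binomial_symmetric[of 1 "c l"] by (intro prod.cong) auto
    moreover have "msubi c (h l) = munit l"
      using that by (auto simp: msubi_def h_def munit_def fun_eq_iff)
    ultimately show ?thesis by (simp add: g_def h_def)
  qed
  ultimately show ?thesis using c by (simp add: sprod_def g_def cong: if_cong)
qed

lemma spow_idm: "spow 1 j idm = (\<lambda>r c. if r = c \<and> mdeg c = j then 1 else (0::complex))"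
proof (induction j)
  case 0
  show ?case by (auto simp: fun_eq_iff unitm_def mdeg_eq_0_iff)
next
  case (Suc j)
  have "spow 1 (Suc j) idm r c = (if r = c \<and> mdeg c = Suc j then 1 else 0)" for r c :: "'a mi"
  proof (cases "mdeg c = Suc j")
    case True
    have inner: "(\<Sum>q\<in>{q. q \<le> r}. spow 1 j idm q (c(l := c l - 1)) * idm (msubi r q) (munit l))
        = (if r = c then 1 else 0)" if "0 < c l" for l
    proof -
      have "mdeg (c(l := c l - 1)) = j"
        using mdeg_fun_upd[of c l "c l - 1"] True that by simp
      then have "(\<Sum>q\<in>{q. q \<le> r}. spow 1 j idm q (c(l := c l - 1)) * idm (msubi r q) (munit l))
          = (\<Sum>q\<in>{q. q \<le> r}. if q = c(l := c l - 1) then (if msubi r q = munit l then 1 else 0) else 0)"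
        unfolding Suc.IH by (intro sum.cong) (auto simp: idm_def)
      also have "\<dots> = (if c(l := c l - 1) \<le> r \<and> msubi r (c(l := c l - 1)) = munit l then 1 else 0)"
        by (simp add: sum_mi_le_delta)
      also have "\<dots> = (if r = c then 1 else 0)"
        using msubi_eq_munit_iff[of c l r, OF that] by simp
      finally show ?thesis .
    qed
    have "spow 1 (Suc j) idm r c = sprod j 1 (spow 1 j idm) idm r c"
      by simp
    also have "\<dots> = (\<Sum>l\<in>UNIV. if 0 < c l then of_nat (c l) * (if r = c then 1 else 0) else 0)
        / of_nat (Suc j)"
      unfolding sprod_deg1_right[OF True] by (simp only: inner cong: if_cong)
    also have "\<dots> = (if r = c then (\<Sum>l\<in>UNIV. of_nat (c l)) / of_nat (Suc j) else 0)"
      by (cases "r = c") (simp_all add: if_distrib cong: if_cong, auto intro!: sum.cong)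
    also have "\<dots> = (if r = c then 1 else 0)"
      using True of_nat_neq_0[of j, where 'a=complex]
      by (simp add: mdeg_def of_nat_sum[symmetric] del: of_nat_sum)
    finally show ?thesis using True by simp
  qed (simp add: sprod_def)
  then show ?case by blast
qed

text \<open>A vector of \<open>Sym K^n\<close> is read as a polynomial in \<open>e_1, \<dots>, e_n\<close> through its coefficients
  \<open>u r\<close> at the monomials \<open>e^r\<close>. Then \<open>sv_lin x\<close> is multiplication by the linear form
  \<open>x_1 e_1 + \<dots> + x_n e_n\<close>, \<open>sv_shift d\<close> multiplication by \<open>e^d\<close>, and \<open>sv_deriv i\<close> is
  \<open>\<partial>/\<partial>e_i\<close>.\<close>

type_synonym 'n svec = "'n mi \<Rightarrow> complex"

definition sv_monom :: "'n mi \<Rightarrow> 'n svec" where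
  "sv_monom c r = (if r = c then 1 else 0)"

definition sv_lin :: "('n::finite \<Rightarrow> complex) \<Rightarrow> 'n svec \<Rightarrow> 'n svec" where
  "sv_lin x u r = (\<Sum>l\<in>UNIV. if 0 < r l then x l * u (r(l := r l - 1)) else 0)"

definition sv_shift :: "'n mi \<Rightarrow> 'n svec \<Rightarrow> 'n svec" where
  "sv_shift d u r = (if d \<le> r then u (msubi r d) else 0)"

definition sv_deriv :: "'n \<Rightarrow> 'n svec \<Rightarrow> 'n svec" where
  "sv_deriv i u r = of_nat (Suc (r i)) * u (r(i := Suc (r i)))"

definition mapply :: "nat \<Rightarrow> 'n::finite smat \<Rightarrow> 'n svec \<Rightarrow> 'n svec" where
  "mapply d M v r = (\<Sum>m\<in>{m. mdeg m = d}. M r m * v m)"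

lemma sv_shift_monom_mzero: "sv_shift d (sv_monom mzero) = sv_monom d"
  by (auto simp: sv_shift_def sv_monom_def fun_eq_iff msubi_def mzero_def le_fun_def)
     (metis diff_is_0_eq le_antisym)

lemma sv_shift_lin: "sv_shift d (sv_lin x u) = sv_lin x (sv_shift d u)"
proof
  fix r
  show "sv_shift d (sv_lin x u) r = sv_lin x (sv_shift d u) r"
  proof (cases "d \<le> r")
    case True
    have "(if 0 < msubi r d l then x l * u ((msubi r d)(l := msubi r d l - 1)) else 0) =
        (if 0 < r l then x l * sv_shift d u (r(l := r l - 1)) else 0)" for l
    proof (cases "d l < r l")
      case True
      with \<open>d \<le> r\<close> have "d \<le> r(l := r l - 1)" by (auto simp: le_fun_def)
      moreover have "(msubi r d)(l := msubi r d l - 1) = msubi (r(l := r l - 1)) d"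
        by (auto simp: msubi_def fun_eq_iff)
      ultimately show ?thesis using True by (simp add: msubi_def sv_shift_def)
    next
      case False
      with \<open>d \<le> r\<close> have "d l = r l" by (metis le_fun_def nat_less_le)
      then have "\<not> (0 < r l \<and> d \<le> r(l := r l - 1))" by (auto simp: le_fun_def dest: spec[of _ l])
      with \<open>d l = r l\<close> show ?thesis by (auto simp: msubi_def sv_shift_def)
    qed
    with True show ?thesis by (simp add: sv_shift_def sv_lin_def)
  next
    case False
    have "r(l := r l - 1) \<le> r" for l by (simp add: le_fun_def)
    with False have "sv_shift d u (r(l := r l - 1)) = 0" for l
      unfolding sv_shift_def using order_trans by metis
    with False show ?thesis by (simp add: sv_shift_def sv_lin_def cong: if_cong)
  qed
qed

lemma sv_shift_lin_pow_monom_mzero: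
  "sv_shift d ((sv_lin x ^^ j) (sv_monom mzero)) = (sv_lin x ^^ j) (sv_monom d)"
  by (induction j) (simp_all add: sv_shift_monom_mzero sv_shift_lin)

lemma sv_lin_monom_mzero:
  "sv_lin x (sv_monom mzero) r = (\<Sum>l\<in>UNIV. if r = munit l then x l else 0)"
  unfolding sv_lin_def sv_monom_def
  by (rule sum.cong) (auto simp: munit_def mzero_def fun_eq_iff split: if_splits)

lemma sv_lin_monom_mzero_munit [simp]: "sv_lin x (sv_monom mzero) (munit i) = x i"
  by (simp add: sv_lin_monom_mzero)

lemma sv_lin_monom_mzero_eq_0: "mdeg r \<noteq> 1 \<Longrightarrow> sv_lin x (sv_monom mzero) r = 0"
  unfolding sv_lin_monom_mzero by (intro sum.neutral) auto

lemma sv_lin_convolution: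
  "(\<Sum>q\<in>{q. q \<le> r}. u q * sv_lin x (sv_monom mzero) (msubi r q)) = sv_lin x u r"
proof -
  have "(\<Sum>q\<in>{q. q \<le> r}. u q * sv_lin x (sv_monom mzero) (msubi r q))
      = (\<Sum>l\<in>UNIV. \<Sum>q\<in>{q. q \<le> r}. if msubi r q = munit l then x l * u q else 0)"
    unfolding sv_lin_monom_mzero sum_distrib_left
    by (subst sum.swap) (auto intro!: sum.cong)
  also have "\<dots> = (\<Sum>l\<in>UNIV. if munit l \<le> r then x l * u (msubi r (munit l)) else 0)"
    by (simp add: sum_mi_le_msubi_delta)
  also have "\<dots> = sv_lin x u r"
    unfolding sv_lin_def by (rule sum.cong) (auto simp: munit_le_iff msubi_munit)
  finally show ?thesis .
qed

lemma sv_lin_pow_Suc: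
  "(sv_lin x ^^ Suc j) u r
     = (\<Sum>l\<in>UNIV. if 0 < r l then x l * (sv_lin x ^^ j) u (r(l := r l - 1)) else 0)"
  unfolding funpow.simps comp_apply by (rule sv_lin_def)

lemma sv_lin_pow_expand:
  assumes "mdeg r = d + j"
  shows "(sv_lin x ^^ j) u r = (\<Sum>q\<in>{q. mdeg q = d}. u q * (sv_lin x ^^ j) (sv_monom q) r)"
  using assms
proof (induction j arbitrary: r)
  case 0
  then show ?case by (simp add: sv_monom_def finite_mdeg_eq if_distrib cong: if_cong)
next
  case (Suc j)
  have "(if 0 < r l then x l * (sv_lin x ^^ j) u (r(l := r l - 1)) else 0) =
      (\<Sum>q\<in>{q. mdeg q = d}. u q *
         (if 0 < r l then x l * (sv_lin x ^^ j) (sv_monom q) (r(l := r l - 1)) else 0))" for l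
  proof (cases "0 < r l")
    case True
    then have "mdeg (r(l := r l - 1)) = d + j"
      using mdeg_fun_upd[of r l "r l - 1"] Suc.prems by simp
    with True show ?thesis
      unfolding Suc.IH[OF \<open>mdeg (r(l := r l - 1)) = d + j\<close>]
      by (simp add: sum_distrib_left mult.left_commute)
  qed simp
  then show ?case
    by (simp only: sv_lin_pow_Suc sum.swap[of _ UNIV] sum_distrib_left)
qed

lemma sv_lin_add_scale:
  "sv_lin x (\<lambda>r. f r + a * g r) = (\<lambda>r. sv_lin x f r + a * sv_lin x g r)"
proof
  fix r
  have "(if 0 < r l then x l * (f (r(l := r l - 1)) + a * g (r(l := r l - 1))) else 0)
      = (if 0 < r l then x l * f (r(l := r l - 1)) else 0)
        + a * (if 0 < r l then x l * g (r(l := r l - 1)) else 0)" for l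
    by (simp add: algebra_simps)
  then show "sv_lin x (\<lambda>r. f r + a * g r) r = sv_lin x f r + a * sv_lin x g r"
    unfolding sv_lin_def by (simp add: sum.distrib sum_distrib_left)
qed

lemma sv_lin_pow_add_scale:
  "(sv_lin x ^^ j) (\<lambda>r. f r + a * g r) = (\<lambda>r. (sv_lin x ^^ j) f r + a * (sv_lin x ^^ j) g r)"
  by (induction j) (simp_all add: sv_lin_add_scale)

lemma sv_lin_zero: "sv_lin x (\<lambda>r. 0) = (\<lambda>r. 0)"
  unfolding sv_lin_def by (simp add: fun_eq_iff cong: if_cong)

lemma sv_lin_pow_zero: "(sv_lin x ^^ j) (\<lambda>r. 0) = (\<lambda>r. 0)"
  by (induction j) (simp_all add: sv_lin_zero)

lemma Suc_mult_fact_mult_choose: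
  "Suc m * (fact j * (Suc m + j choose j)) = (fact (Suc j) * (m + Suc j choose Suc j) :: nat)"
proof -
  have sums: "Suc m + j = Suc (j + m)" "m + Suc j = Suc (j + m)" by simp_all
  have "fact (Suc j) * (m + Suc j choose Suc j) = fact j * (Suc j * (Suc (j + m) choose Suc j))"
    unfolding sums fact_Suc of_nat_id by (simp only: mult_ac)
  also have "\<dots> = fact j * (Suc m * (Suc (j + m) choose j))"
    by (simp only: Suc_times_binomial_add)
  finally show ?thesis unfolding sums by (simp only: mult_ac)
qed

lemma sv_deriv_pow:
  "(sv_deriv i ^^ j) u r = of_nat (fact j * ((r i + j) choose j)) * u (r(i := r i + j))"
proof (induction j arbitrary: r)
  case (Suc j)
  have upd: "(r(i := Suc (r i)))(i := Suc (r i) + j) = r(i := r i + Suc j)" by simp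
  have "(sv_deriv i ^^ Suc j) u r = of_nat (Suc (r i)) * (sv_deriv i ^^ j) u (r(i := Suc (r i)))"
    by (simp only: funpow.simps comp_apply sv_deriv_def)
  also have "\<dots> = of_nat (Suc (r i) * (fact j * ((Suc (r i) + j) choose j))) * u (r(i := r i + Suc j))"
    by (simp only: Suc.IH upd fun_upd_same of_nat_mult mult.assoc)
  also have "\<dots> = of_nat (fact (Suc j) * (r i + Suc j choose Suc j)) * u (r(i := r i + Suc j))"
    by (simp only: Suc_mult_fact_mult_choose)
  finally show ?case .
qed simp

lemma sv_deriv_lin: "sv_deriv i (sv_lin x u) r = sv_lin x (sv_deriv i u) r + x i * u r"
proof -
  define r' where "r' = r(i := Suc (r i))"
  define f where "f l = (if 0 < r' l then x l * u (r'(l := r' l - 1)) else 0)" for l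
  define g where "g l = (if 0 < r l then x l * sv_deriv i u (r(l := r l - 1)) else 0)" for l
  have "sv_deriv i (sv_lin x u) r = of_nat (Suc (r i)) * (f i + (\<Sum>l\<in>UNIV-{i}. f l))"
    unfolding sv_deriv_def sv_lin_def f_def r'_def by (subst sum.remove[of _ i]) auto
  moreover have "sv_lin x (sv_deriv i u) r = g i + (\<Sum>l\<in>UNIV-{i}. g l)"
    unfolding sv_lin_def g_def by (subst sum.remove[of _ i]) auto
  moreover have "f i = x i * u r"
    by (simp add: f_def r'_def)
  moreover have "g i = of_nat (r i) * x i * u r"
    by (cases "r i") (auto simp: g_def sv_deriv_def fun_upd_idem)
  moreover have "of_nat (Suc (r i)) * (\<Sum>l\<in>UNIV-{i}. f l) = (\<Sum>l\<in>UNIV-{i}. g l)"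
    unfolding sum_distrib_left
    by (rule sum.cong) (auto simp: f_def g_def r'_def sv_deriv_def fun_upd_twist)
  ultimately show ?thesis by (simp add: algebra_simps)
qed

lemma sv_deriv_pow_lin: "(sv_deriv i ^^ Suc j) (sv_lin x u) =
   (\<lambda>r. sv_lin x ((sv_deriv i ^^ Suc j) u) r + of_nat (Suc j) * x i * (sv_deriv i ^^ j) u r)"
proof (induction j)
  case 0
  then show ?case by (simp add: fun_eq_iff sv_deriv_lin)
next
  case (Suc j)
  have "(sv_deriv i ^^ Suc (Suc j)) (sv_lin x u) = sv_deriv i ((sv_deriv i ^^ Suc j) (sv_lin x u))"
    by simp
  also have "\<dots> = (\<lambda>r. sv_deriv i (sv_lin x ((sv_deriv i ^^ Suc j) u)) r
      + of_nat (Suc j) * x i * sv_deriv i ((sv_deriv i ^^ j) u) r)"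
    unfolding Suc.IH by (simp add: sv_deriv_def fun_eq_iff algebra_simps)
  also have "\<dots> = (\<lambda>r. sv_lin x ((sv_deriv i ^^ Suc (Suc j)) u) r
      + of_nat (Suc (Suc j)) * x i * (sv_deriv i ^^ Suc j) u r)"
    by (simp add: sv_deriv_lin fun_eq_iff algebra_simps)
  finally show ?case .
qed

lemma sv_deriv_pow_monom_eq_0:
  assumes "mdeg c < k"
  shows "(sv_deriv i ^^ k) (sv_monom c) = (\<lambda>r. 0)"
proof
  fix r
  have "c i \<le> mdeg c" by (rule mi_le_mdeg)
  with assms have "r(i := r i + k) \<noteq> c" by (auto simp: fun_eq_iff dest: spec[of _ i])
  then show "(sv_deriv i ^^ k) (sv_monom c) r = 0" by (simp add: sv_deriv_pow sv_monom_def)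
qed

lemma mapply_msum: "mapply d (msum J f) v r = (\<Sum>j\<in>J. mapply d (f j) v r)"
  unfolding mapply_def msum_def by (simp add: sum_distrib_right sum.swap[of _ J])

lemma mapply_mscale: "mapply d (mscale a M) v r = a * mapply d M v r"
  unfolding mapply_def mscale_def by (simp add: sum_distrib_left mult.assoc)

lemma mmul_eq_mapply: "mmul d M N r c = mapply d M (\<lambda>m. N m c) r"
  by (simp add: mmul_def mapply_def)

definition col_vec :: "('n::finite \<Rightarrow> complex) \<Rightarrow> 'n smat" where
  "col_vec x = (\<lambda>r c. if c = mzero then sv_lin x (sv_monom mzero) r else 0)"

text \<open>The matrix \<open>x e_i^T / x_i\<close>; it is \<open>Id_n - F_1\<close>.\<close>

definition rank1_proj :: "('n::finite \<Rightarrow> complex) \<Rightarrow> 'n \<Rightarrow> 'n smat" where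
  "rank1_proj x i = (\<lambda>r c. if c = munit i then sv_lin x (sv_monom mzero) r / x i else 0)"

lemma pderiv_mzero [simp]: "pderiv mzero f = f"
  by (simp add: pderiv_def)

lemma derivmat_0: "derivmat X z 0 = col_vec (\<lambda>l. X z $ l)"
proof (intro ext)
  fix r c
  show "derivmat X z 0 r c = col_vec (\<lambda>l. X z $ l) r c"
    by (cases "c = mzero")
       (simp_all add: derivmat_def col_vec_def mdeg_eq_0_iff sv_lin_monom_mzero cong: if_cong)
qed

lemma sprod_col_vec_erow:
  "sprod 0 1 (col_vec x) (erow i) = (\<lambda>r c. if c = munit i then sv_lin x (sv_monom mzero) r else 0)"
proof (intro ext)
  fix r c
  show "sprod 0 1 (col_vec x) (erow i) r c = (if c = munit i then sv_lin x (sv_monom mzero) r else 0)"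
  proof (cases "mdeg c = 1")
    case True
    have "sprod 0 1 (col_vec x) (erow i) r c
       = (\<Sum>q\<in>{q. q \<le> r}. if msubi r q = mzero then (if c = munit i then sv_lin x (sv_monom mzero) q else 0) else 0)"
      unfolding sprod_0_left[OF True] by (rule sum.cong) (auto simp: erow_def col_vec_def)
    then show ?thesis by (simp add: sum_mi_le_msubi_delta)
  qed (auto simp: sprod_def)
qed

lemma idm_minus_F1:
  "madd idm (mscale (- 1) (madd idm (mscale (- (1 / x i)) (sprod 0 1 (col_vec x) (erow i)))))
     = rank1_proj x i"
  unfolding sprod_col_vec_erow by (auto simp: madd_def mscale_def rank1_proj_def fun_eq_iff)

lemma msubi_munit_pow_eq_munit_iff: "msubi c (munit_pow i j) = munit i \<longleftrightarrow> c = munit_pow i (Suc j)"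
proof
  assume h: "msubi c (munit_pow i j) = munit i"
  show "c = munit_pow i (Suc j)"
  proof
    fix m
    from h have "c m - munit_pow i j m = munit i m" unfolding msubi_def by (rule fun_cong)
    then show "c m = munit_pow i (Suc j) m" by (cases "m = i") (auto simp: munit_def munit_pow_def)
  qed
qed (auto simp: msubi_def munit_def munit_pow_def fun_eq_iff)

lemma spow_rank1_proj:
  "spow 1 j (rank1_proj x i)
     = (\<lambda>r c. if c = munit_pow i j then (sv_lin x ^^ j) (sv_monom mzero) r / x i ^ j else 0)"
proof (induction j)
  case 0
  have "munit_pow i 0 = mzero" by (simp add: munit_pow_def mzero_def fun_eq_iff)
  then show ?case by (simp add: fun_eq_iff unitm_def sv_monom_def)
next
  case (Suc j)
  let ?G = "rank1_proj x i" and ?p = "munit_pow i j" and ?c = "munit_pow i (Suc j)"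
  have col: "spow 1 j ?G q p = 0" if "p \<noteq> ?p" for q p
    unfolding Suc.IH using that by simp
  have "spow 1 (Suc j) ?G r c = (if c = ?c then (sv_lin x ^^ Suc j) (sv_monom mzero) r / x i ^ Suc j else 0)"
    for r c
  proof (cases "mdeg c = j + 1")
    case True
    have "spow 1 (Suc j) ?G r c = sprod j 1 (spow 1 j ?G) ?G r c"
      by simp
    also have "\<dots> = (if j \<le> c i then of_nat (c i choose j) *
        (\<Sum>q\<in>{q. q \<le> r}. spow 1 j ?G q ?p * ?G (msubi r q) (msubi c ?p)) else 0)
          / of_nat ((j + 1) choose j)"
      by (rule sprod_single_column[OF col True])
    also have "\<dots> = (if c = ?c then (\<Sum>q\<in>{q. q \<le> r}.
        (sv_lin x ^^ j) (sv_monom mzero) q * sv_lin x (sv_monom mzero) (msubi r q)) / x i ^ Suc j else 0)"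
    proof (cases "c = ?c")
      case True
      then have "c i = Suc j" "msubi c ?p = munit i"
        by (simp add: munit_pow_def, simp add: msubi_munit_pow_eq_munit_iff)
      moreover have "of_nat (Suc j) \<noteq> (0::complex)"
        by (rule of_nat_neq_0)
      ultimately show ?thesis
        unfolding Suc.IH using True by (simp add: rank1_proj_def sum_divide_distrib mult.commute del: of_nat_Suc)
    next
      case False
      then have "msubi c ?p \<noteq> munit i"
        by (simp add: msubi_munit_pow_eq_munit_iff)
      with False show ?thesis
        by (simp add: rank1_proj_def)
    qed
    finally show ?thesis by (simp add: sv_lin_convolution)
  next
    case False
    then have "c \<noteq> ?c" by auto
    with False show ?thesis by (simp add: sprod_eq_0_off_degree)
  qed
  then show ?case by blast
qed

lemma sprod_col_vec_spow_idm:
  assumes "mdeg c = K"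
  shows "sprod 0 K (col_vec x) (spow 1 K idm) m c = sv_lin x (sv_monom c) m"
proof -
  have "sprod 0 K (col_vec x) (spow 1 K idm) m c
      = (\<Sum>q\<in>{q. q \<le> m}. if msubi m q = c then sv_lin x (sv_monom mzero) q else 0)"
    unfolding sprod_0_left[OF assms] spow_idm using assms by (intro sum.cong) (auto simp: col_vec_def)
  also have "\<dots> = sv_shift c (sv_lin x (sv_monom mzero)) m"
    by (simp add: sum_mi_le_msubi_delta sv_shift_def)
  finally show ?thesis by (simp add: sv_shift_lin sv_shift_monom_mzero)
qed

lemma sprod_erow_right:
  assumes "mdeg m = Suc K"
  shows "sprod K 1 V (erow i) r m
     = (if 0 < m i then of_nat (m i) * V r (m(i := m i - 1)) else 0) / of_nat (Suc K)"
proof -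
  have "(if 0 < m l then of_nat (m l) *
          (\<Sum>q\<in>{q. q \<le> r}. V q (m(l := m l - 1)) * erow i (msubi r q) (munit l)) else 0)
      = (if l = i then (if 0 < m i then of_nat (m i) * V r (m(i := m i - 1)) else 0) else 0)" for l
    by (cases "l = i") (simp_all add: erow_def sum_mi_le_msubi_delta if_distrib cong: if_cong)
  then show ?thesis
    unfolding sprod_deg1_right[OF assms] by simp
qed

lemma mapply_sprod_erow:
  "mapply (Suc K) (sprod K 1 V (erow i)) w r = mapply K V (sv_deriv i w) r / of_nat (Suc K)"
proof -
  have "mapply (Suc K) (sprod K 1 V (erow i)) w r = (\<Sum>m\<in>{m. mdeg m = Suc K}.
      if 0 < m i then of_nat (m i) * V r (m(i := m i - 1)) * w m / of_nat (Suc K) else 0)"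
    unfolding mapply_def by (rule sum.cong) (simp_all add: sprod_erow_right del: One_nat_def)
  also have "\<dots> = (\<Sum>m\<in>{m. mdeg m = Suc K \<and> 0 < m i}.
      of_nat (m i) * V r (m(i := m i - 1)) * w m) / of_nat (Suc K)"
    by (simp add: sum.inter_filter[OF finite_mdeg_eq, symmetric] sum_divide_distrib del: One_nat_def)
  also have "(\<Sum>m\<in>{m. mdeg m = Suc K \<and> 0 < m i}. of_nat (m i) * V r (m(i := m i - 1)) * w m)
      = (\<Sum>p\<in>{p. mdeg p = K}. V r p * sv_deriv i w p)"
  proof (rule sum.reindex_bij_witness[where i = "\<lambda>p. p(i := Suc (p i))" and j = "\<lambda>m. m(i := m i - 1)"])
    fix m :: "'a mi" assume m: "m \<in> {m. mdeg m = Suc K \<and> 0 < m i}"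
    then show "(m(i := m i - 1))(i := Suc ((m(i := m i - 1)) i)) = m" by auto
    from m show "m(i := m i - 1) \<in> {p. mdeg p = K}"
      using mdeg_fun_upd[of m i "m i - 1"] by auto
    from m have "(m(i := m i - 1))(i := Suc (m i - 1)) = m" by auto
    with m show "V r (m(i := m i - 1)) * sv_deriv i w (m(i := m i - 1))
        = of_nat (m i) * V r (m(i := m i - 1)) * w m"
      by (simp add: sv_deriv_def)
  next
    fix p :: "'a mi" assume "p \<in> {p. mdeg p = K}"
    then show "p(i := Suc (p i)) \<in> {m. mdeg m = Suc K \<and> 0 < m i}"
      using mdeg_fun_upd[of p i "Suc (p i)"] by auto
  qed simp
  finally show ?thesis by (simp add: mapply_def)
qed

lemma sprod_spow_rank1_proj_spow_idm:
  assumes p: "mdeg p = K" and j: "j \<le> K"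
  shows "sprod j (K - j) (spow 1 j (rank1_proj x i)) (spow 1 (K - j) idm) r p =
     (if j \<le> p i then of_nat (p i choose j) * (sv_lin x ^^ j) (sv_monom (p(i := p i - j))) r / x i ^ j
      else 0) / of_nat (K choose j)"
proof -
  have col: "spow 1 j (rank1_proj x i) q c = 0" if "c \<noteq> munit_pow i j" for q c
    unfolding spow_rank1_proj using that by simp
  have "(\<Sum>q\<in>{q. q \<le> r}. spow 1 j (rank1_proj x i) q (munit_pow i j)
            * spow 1 (K - j) idm (msubi r q) (msubi p (munit_pow i j)))
      = (sv_lin x ^^ j) (sv_monom (p(i := p i - j))) r / x i ^ j" if "j \<le> p i"
  proof -
    have "mdeg (p(i := p i - j)) = K - j"
      using mdeg_fun_upd[of p i "p i - j"] p that by simp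
    then have "(\<Sum>q\<in>{q. q \<le> r}. spow 1 j (rank1_proj x i) q (munit_pow i j)
            * spow 1 (K - j) idm (msubi r q) (msubi p (munit_pow i j)))
        = (\<Sum>q\<in>{q. q \<le> r}. if msubi r q = p(i := p i - j)
            then (sv_lin x ^^ j) (sv_monom mzero) q / x i ^ j else 0)"
      unfolding spow_rank1_proj spow_idm msubi_munit_pow by (intro sum.cong) auto
    also have "\<dots> = sv_shift (p(i := p i - j)) ((sv_lin x ^^ j) (sv_monom mzero)) r / x i ^ j"
      by (simp add: sum_mi_le_msubi_delta sv_shift_def)
    finally show ?thesis by (simp add: sv_shift_lin_pow_monom_mzero)
  qed
  moreover have "mdeg p = j + (K - j)" using p j by simp
  ultimately show ?thesis using j by (simp add: sprod_single_column[OF col] del: One_nat_def)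
qed

lemma mapply_sprod_spow_rank1_proj_spow_idm:
  assumes r: "mdeg r = K" and j: "j \<le> K"
  shows "mapply K (sprod j (K - j) (spow 1 j (rank1_proj x i)) (spow 1 (K - j) idm)) v r
     = (sv_lin x ^^ j) ((sv_deriv i ^^ j) v) r / (x i ^ j * fact j * of_nat (K choose j))"
proof -
  define D where "D = x i ^ j * of_nat (K choose j)"
  define f where "f p = of_nat (p i choose j) * (sv_lin x ^^ j) (sv_monom (p(i := p i - j))) r * v p / D"
    for p
  have "mapply K (sprod j (K - j) (spow 1 j (rank1_proj x i)) (spow 1 (K - j) idm)) v r
      = (\<Sum>p\<in>{p. mdeg p = K}. if j \<le> p i then f p else 0)"
    unfolding mapply_def
    by (rule sum.cong) (simp_all add: sprod_spow_rank1_proj_spow_idm j f_def D_def del: One_nat_def)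
  also have "\<dots> = (\<Sum>p\<in>{p \<in> {p. mdeg p = K}. j \<le> p i}. f p)"
    by (rule sum.inter_filter[OF finite_mdeg_eq, symmetric])
  also have "\<dots> = (\<Sum>q\<in>{q. mdeg q = K - j}. f (q(i := q i + j)))"
  proof (rule sum.reindex_bij_witness[where i = "\<lambda>q. q(i := q i + j)" and j = "\<lambda>p. p(i := p i - j)"])
    fix p :: "'a mi" assume p: "p \<in> {p \<in> {p. mdeg p = K}. j \<le> p i}"
    then show upd: "(p(i := p i - j))(i := (p(i := p i - j)) i + j) = p"
      by auto
    from p show "p(i := p i - j) \<in> {q. mdeg q = K - j}"
      using mdeg_fun_upd[of p i "p i - j"] by auto
    from upd show "f ((p(i := p i - j))(i := (p(i := p i - j)) i + j)) = f p"
      by (rule arg_cong)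
  next
    fix q :: "'a mi" assume "q \<in> {q. mdeg q = K - j}"
    then show "(q(i := q i + j))(i := (q(i := q i + j)) i - j) = q"
      and "q(i := q i + j) \<in> {p \<in> {p. mdeg p = K}. j \<le> p i}"
      using mdeg_fun_upd[of q i "q i + j"] j by auto
  qed
  also have "\<dots> = (\<Sum>q\<in>{q. mdeg q = K - j}. (sv_deriv i ^^ j) v q * (sv_lin x ^^ j) (sv_monom q) r)
      / (fact j * D)"
    unfolding sum_divide_distrib by (rule sum.cong) (simp_all add: f_def sv_deriv_pow field_simps)
  also have "\<dots> = (sv_lin x ^^ j) ((sv_deriv i ^^ j) v) r / (fact j * D)"
  proof -
    from r j have "mdeg r = (K - j) + j" by simp
    from sv_lin_pow_expand[where u = "(sv_deriv i ^^ j) v", OF this] show ?thesis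
      by (simp only:)
  qed
  finally show ?thesis by (simp add: D_def ac_simps)
qed

lemma filter_U_term_telescopes:
  fixes \<xi> a b :: complex
  assumes "\<xi> \<noteq> 0" and "j \<le> K"
  shows "of_nat (Suc K choose Suc j) * (- 1) ^ j
      * ((b + of_nat (Suc j) * \<xi> * a) / (\<xi> ^ j * fact j * of_nat (K choose j)))
    = of_nat (Suc K) * \<xi>
      * ((- 1) ^ j / (fact j * \<xi> ^ j) * a - (- 1) ^ Suc j / (fact (Suc j) * \<xi> ^ Suc j) * b)"
proof -
  define Q where "Q = (of_nat (Suc K choose Suc j) :: complex)"
  define B where "B = (of_nat (K choose j) :: complex)"
  define S where "S = (of_nat (Suc j) :: complex)"
  have "B \<noteq> 0" using assms(2) by (simp add: B_def)
  have "S \<noteq> 0" unfolding S_def by (rule of_nat_neq_0)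
  have "of_nat (Suc K) * B = Q * S"
    unfolding Q_def S_def B_def by (metis Suc_times_binomial_eq of_nat_mult)
  then have N: "of_nat (Suc K) = Q * S / B"
    using \<open>B \<noteq> 0\<close> by (simp add: eq_divide_eq)
  have fact_Suc: "fact (Suc j) = S * fact j"
    by (simp add: S_def)
  show ?thesis
    unfolding N Q_def[symmetric] B_def[symmetric] S_def[symmetric] fact_Suc
    using assms(1) \<open>B \<noteq> 0\<close> \<open>S \<noteq> 0\<close> by (simp add: field_simps)
qed

definition filter_U :: "'n::finite smat \<Rightarrow> 'n \<Rightarrow> nat \<Rightarrow> 'n smat" where
  "filter_U G i k = sprod (k - 1) 1
     (msum {0..k-1} (\<lambda>j. mscale (of_nat (k choose (j + 1)) * (- 1) ^ j)
        (sprod j (k - 1 - j) (spow 1 j G) (spow 1 (k - 1 - j) idm))))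
     (erow i)"

lemma mapply_filter_U_lin_monom:
  assumes xi: "x i \<noteq> 0" and c: "mdeg c = K" and r: "mdeg r = K"
  shows "mapply (Suc K) (filter_U (rank1_proj x i) i (Suc K)) (sv_lin x (sv_monom c)) r
    = x i * sv_monom c r"
proof -
  define V where "V j = sprod j (K - j) (spow 1 j (rank1_proj x i)) (spow 1 (K - j) idm)" for j
  define M where "M j = (sv_lin x ^^ j) ((sv_deriv i ^^ j) (sv_monom c)) r" for j
  define t where "t j = (- 1) ^ j / (fact j * x i ^ j) * M j" for j
  have summand: "of_nat (Suc K choose Suc j) * (- 1) ^ j
        * mapply K (V j) (sv_deriv i (sv_lin x (sv_monom c))) r
      = of_nat (Suc K) * x i * (t j - t (Suc j))" if j: "j \<le> K" for j
  proof -
    have deriv_Suc: "(sv_deriv i ^^ j) (sv_deriv i u) = (sv_deriv i ^^ Suc j) u" for u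
      by (simp only: funpow_Suc_right comp_apply)
    have "(sv_lin x ^^ j) ((sv_deriv i ^^ j) (sv_deriv i (sv_lin x (sv_monom c)))) r
        = M (Suc j) + of_nat (Suc j) * x i * M j"
      unfolding deriv_Suc sv_deriv_pow_lin sv_lin_pow_add_scale M_def
      by (simp only: funpow_Suc_right comp_apply)
    then show ?thesis
      unfolding V_def mapply_sprod_spow_rank1_proj_spow_idm[OF r j] t_def
      using filter_U_term_telescopes[OF xi j] by simp
  qed
  have "mapply (Suc K) (filter_U (rank1_proj x i) i (Suc K)) (sv_lin x (sv_monom c)) r
      = (\<Sum>j\<in>{..<Suc K}. of_nat (Suc K choose Suc j) * (- 1) ^ j
          * mapply K (V j) (sv_deriv i (sv_lin x (sv_monom c))) r) / of_nat (Suc K)"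
    unfolding filter_U_def diff_Suc_1 mapply_sprod_erow mapply_msum mapply_mscale V_def
    by (simp add: atLeast0AtMost lessThan_Suc_atMost)
  also have "\<dots> = (\<Sum>j<Suc K. of_nat (Suc K) * x i * (t j - t (Suc j))) / of_nat (Suc K)"
    by (rule arg_cong[where f = "\<lambda>s. s / _"], rule sum.cong[OF refl], rule summand) simp
  also have "\<dots> = x i * (t 0 - t (Suc K))"
    unfolding sum_distrib_left[symmetric] sum_lessThan_telescope' by (simp del: of_nat_Suc)
  also have "\<dots> = x i * sv_monom c r"
    using sv_deriv_pow_monom_eq_0[of c "Suc K" i] c by (simp add: t_def M_def sv_lin_pow_zero sv_lin_zero)
  finally show ?thesis .
qed

lemma mmul_filter_U_col_vec:
  assumes xi: "x i \<noteq> 0" and r: "mdeg r = K"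
  shows "mmul (Suc K) (filter_U (rank1_proj x i) i (Suc K)) (sprod 0 K (col_vec x) (spow 1 K idm)) r c
    = x i * spow 1 K idm r c"
proof (cases "mdeg c = K")
  case True
  then show ?thesis
    unfolding mmul_eq_mapply sprod_col_vec_spow_idm[OF True] mapply_filter_U_lin_monom[of x i, OF xi True r]
    unfolding spow_idm by (simp add: sv_monom_def)
qed (unfold spow_idm, simp add: mmul_def sprod_eq_0_off_degree)

lemma mmul_assoc: "mmul e (mmul d A B) C = mmul d A (mmul e B C)"
  unfolding mmul_def
  by (simp add: fun_eq_iff sum_distrib_left sum_distrib_right mult.assoc sum.swap[of _ "{m. mdeg m = e}"])

lemma mmul_mscale_left: "mmul d (mscale a A) B = mscale a (mmul d A B)"
  by (simp add: mmul_def mscale_def fun_eq_iff sum_distrib_left mult.assoc)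

lemma mmul_scaled_spow_idm_right:
  assumes W: "\<And>r c. mdeg c \<noteq> d \<Longrightarrow> W r c = 0"
    and N: "\<And>r c. mdeg r = d \<Longrightarrow> N r c = a * spow 1 d idm r c"
  shows "mmul d W N = mscale a W"
proof (intro ext)
  fix r c
  have "mmul d W N r c = (\<Sum>m\<in>{m. mdeg m = d}. if m = c then a * W r c else 0)"
    unfolding mmul_def by (rule sum.cong) (auto simp: N[unfolded spow_idm])
  then show "mmul d W N r c = mscale a W r c"
    using W[of c r] by (cases "mdeg c = d") (simp_all add: mscale_def finite_mdeg_eq)
qed

lemma mmul_F1_col_vec:
  assumes xi: "x i \<noteq> 0"
  shows "mmul 1 (madd idm (mscale (- (1 / x i)) (sprod 0 1 (col_vec x) (erow i))))
      (sprod 0 0 (col_vec x) (spow 1 0 idm)) = mzeromat"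
proof (intro ext)
  fix r c
  let ?a = "sv_lin x (sv_monom mzero)"
  show "mmul 1 (madd idm (mscale (- (1 / x i)) (sprod 0 1 (col_vec x) (erow i))))
      (sprod 0 0 (col_vec x) (spow 1 0 idm)) r c = mzeromat r c"
  proof (cases "c = mzero")
    case True
    have "mmul 1 (madd idm (mscale (- (1 / x i)) (sprod 0 1 (col_vec x) (erow i))))
        (sprod 0 0 (col_vec x) (spow 1 0 idm)) r c
      = (\<Sum>m\<in>{m. mdeg m = 1}. (if m = r then ?a m else 0) - (if m = munit i then ?a r * ?a m / x i else 0))"
      unfolding True mmul_eq_mapply sprod_col_vec_spow_idm[OF mdeg_mzero] mapply_def sprod_col_vec_erow
      by (rule sum.cong) (auto simp: madd_def mscale_def idm_def algebra_simps)
    also have "\<dots> = (if mdeg r = 1 then ?a r else 0) - ?a r"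
      using xi by (simp add: sum_subtractf finite_mdeg_eq)
    also have "\<dots> = 0"
      using sv_lin_monom_mzero_eq_0[of r x] by auto
    finally show ?thesis by (simp add: mzeromat_def)
  next
    case False
    then show ?thesis by (simp add: mmul_def mzeromat_def sprod_eq_0_off_degree mdeg_eq_0_iff)
  qed
qed

definition kernel_term :: "(nat \<Rightarrow> 'n smat) \<Rightarrow> (nat \<Rightarrow> 'n smat) \<Rightarrow> nat \<Rightarrow> nat \<Rightarrow> 'n::finite smat" where
  "kernel_term A F k j = mscale (of_nat ((k - 1) choose j))
     (mmul (j + 1) (F (j + 1)) (sprod (k - 1 - j) j (A (k - 1 - j)) (spow 1 j idm)))"

lemma kernel_term_eq_0_off_degree: "j \<le> K \<Longrightarrow> mdeg c \<noteq> K \<Longrightarrow> kernel_term A F (Suc K) j r c = 0"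
  by (simp add: kernel_term_def mscale_def mmul_def sprod_eq_0_off_degree)

lemma kernel_condition:
  assumes xi: "x i \<noteq> 0" and k: "1 \<le> k" and A0: "A 0 = col_vec x"
    and F1: "F 1 = madd idm (mscale (- (1 / x i)) (sprod 0 1 (A 0) (erow i)))"
    and Fk: "2 \<le> k \<Longrightarrow> F k = mscale (- (1 / x i))
      (mmul (k - 1) (msum {0..k-2} (kernel_term A F k)) (filter_U (madd idm (mscale (- 1) (F 1))) i k))"
  shows "msum {0..k-1} (kernel_term A F k) = mzeromat"
proof (cases "k = 1")
  case True
  have "msum {0..k-1} (kernel_term A F k) = mmul 1 (F 1) (sprod 0 0 (A 0) (spow 1 0 idm))"
    unfolding True by (simp add: msum_def kernel_term_def mscale_def fun_eq_iff del: One_nat_def)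
  then show ?thesis
    unfolding F1 A0 using mmul_F1_col_vec[of x i, OF xi] by simp
next
  case False
  with k obtain K where K: "k = Suc (Suc K)"
    by (metis One_nat_def Suc_le_D le_SucE)
  define W where "W = msum {0..K} (kernel_term A F k)"
  define P where "P = sprod 0 (Suc K) (col_vec x) (spow 1 (Suc K) idm)"
  have G: "madd idm (mscale (- 1) (F 1)) = rank1_proj x i"
    unfolding F1 A0 by (rule idm_minus_F1)
  have Fk': "F k = mscale (- (1 / x i)) (mmul (Suc K) W (filter_U (rank1_proj x i) i k))"
    using Fk unfolding G W_def by (simp add: K)
  have W_off: "W r c = 0" if "mdeg c \<noteq> Suc K" for r c
    using that by (simp add: W_def msum_def K kernel_term_eq_0_off_degree)
  have UP: "mmul k (filter_U (rank1_proj x i) i k) P r c = x i * spow 1 (Suc K) idm r c"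
    if "mdeg r = Suc K" for r c
    unfolding K P_def by (rule mmul_filter_U_col_vec[of x i, OF xi that])
  have "kernel_term A F k (Suc K) = mmul k (F k) P"
    unfolding kernel_term_def K P_def by (simp add: mscale_def A0)
  also have "\<dots> = mscale (- (1 / x i)) (mmul (Suc K) W (mmul k (filter_U (rank1_proj x i) i k) P))"
    unfolding Fk' mmul_mscale_left mmul_assoc ..
  also have "\<dots> = mscale (- (1 / x i)) (mscale (x i) W)"
    using W_off UP by (subst mmul_scaled_spow_idm_right) auto
  finally have "kernel_term A F k (Suc K) = mscale (- 1) W"
    using xi by (simp add: mscale_def fun_eq_iff)
  then show ?thesis
    by (simp add: K msum_def W_def mzeromat_def mscale_def fun_eq_iff)
qed

theorem mainTheorem2:
  fixes X :: "complex^'n::finite \<Rightarrow> complex^'n"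
    and \<phi> :: "complex \<Rightarrow> complex^'n"
    and T :: "complex set"
    and t0 :: complex
    and i :: 'n
    and F :: "nat \<Rightarrow> 'n smat"
  assumes T_open: "open T" and t0_in: "t0 \<in> T"
    and solution: "\<forall>t\<in>T. (\<phi> has_derivative (\<lambda>h. h *s X (\<phi> t))) (at t)"
    and nontrivial: "\<exists>t\<in>T. \<phi> t \<noteq> \<phi> t0"
    and Xi_nz: "X (\<phi> t0) $ i \<noteq> 0"
    and F1: "F 1 = madd idm (mscale (- (1 / X (\<phi> t0) $ i))
                     (sprod 0 1 (derivmat X (\<phi> t0) 0) (erow i)))"
    and Fk: "\<forall>k\<ge>2. F k = mscale (- (1 / X (\<phi> t0) $ i))
               (mmul (k - 1)
                 (msum {0..k-2} (\<lambda>j. mscale (of_nat ((k - 1) choose j))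
                    (mmul (j + 1) (F (j + 1))
                       (sprod (k - j - 1) j (derivmat X (\<phi> t0) (k - j - 1)) (spow 1 j idm)))))
                 (sprod (k - 1) 1
                   (msum {0..k-1} (\<lambda>j. mscale (of_nat (k choose (j + 1)) * (- 1) ^ j)
                      (sprod j (k - 1 - j) (spow 1 j (madd idm (mscale (- 1) (F 1))))
                                           (spow 1 (k - 1 - j) idm))))
                   (erow i)))"
  shows "\<forall>k\<ge>1. msum {0..k-1} (\<lambda>j. mscale (of_nat ((k - 1) choose j))
                 (mmul (j + 1) (F (j + 1))
                    (sprod (k - 1 - j) j (derivmat X (\<phi> t0) (k - 1 - j)) (spow 1 j idm))))
               = mzeromat"
proof (intro allI impI)
  fix k :: nat
  assume k: "1 \<le> k"
  define x where "x = (\<lambda>l. X (\<phi> t0) $ l)"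
  let ?A = "derivmat X (\<phi> t0)"
  have kernel_term: "kernel_term ?A F k = (\<lambda>j. mscale (of_nat ((k - 1) choose j))
      (mmul (j + 1) (F (j + 1)) (sprod (k - j - 1) j (?A (k - j - 1)) (spow 1 j idm))))"
    by (simp add: kernel_term_def fun_eq_iff)
  have "msum {0..k-1} (kernel_term ?A F k) = mzeromat"
  proof (rule kernel_condition[of x i])
    show "x i \<noteq> 0" and "?A 0 = col_vec x"
      using Xi_nz by (simp_all add: x_def derivmat_0)
    show "F 1 = madd idm (mscale (- (1 / x i)) (sprod 0 1 (?A 0) (erow i)))"
      using F1 by (simp add: x_def)
    show "F k = mscale (- (1 / x i)) (mmul (k - 1) (msum {0..k-2} (kernel_term ?A F k))
        (filter_U (madd idm (mscale (- 1) (F 1))) i k))" if "2 \<le> k"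
      using Fk that unfolding kernel_term filter_U_def x_def by blast
  qed (rule k)
  then show "msum {0..k-1} (\<lambda>j. mscale (of_nat ((k - 1) choose j))
      (mmul (j + 1) (F (j + 1)) (sprod (k - 1 - j) j (?A (k - 1 - j)) (spow 1 j idm)))) = mzeromat"
    unfolding kernel_term_def[abs_def] .
qed

end
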